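(* Let $m\ge 2$. For every $N\ge m$ and every integer $d$ with $1\le d\le N-m+1$, the degree of the vertex $v_m$ in the RRH of size $N$ satisfies $$\Pr[d(v_m)=d]=(m-1)\,\frac{\Gamma(N-d)\,\Gamma(N-m+1)}{\Gamma(N-d-m+2)\,\Gamma(N)}.$$ In particular, for $m=2$ the degree of $v_2$ is uniformly distributed on $\{1,\dots,N-1\}$, and for $m=3$, $\Pr[d(v_3)=d]=\frac{2(N-d-1)}{(N-1)(N-2)}$.
   Context: A random recursive hypergraph (RRH) is the random hypergraph process defined as follows. At size $N=1$ it has vertex set $\{v_1\}$ and edge set $\{\{v_1\}\}$. Given the hypergraph of size $N$ (vertices $v_1,\dots,v_N$, exactly $N$ edges), one chooses an existing edge $e$ uniformly at random, independently of the past, and adds a new vertex $v_{N+1}$ together with the new edge $e\cup\{v_{N+1}\}$. The degree $d(v)$ of a vertex $v$ is the number of edges containing it. *)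

theory Defs
  imports "HOL-Probability.Probability"
begin

text \<open>Vertex v_i is represented by the natural number i. A hypergraph is represented
by its set of edges (all edges of an RRH are distinct sets, since each new edge contains
the new vertex). rrh N is the distribution of the random recursive hypergraph of size N
(for N = 0 it is a dummy empty hypergraph, never used).\<close>

fun rrh :: "nat \<Rightarrow> nat set set pmf" where
  "rrh 0 = return_pmf {}"
| "rrh (Suc 0) = return_pmf {{1}}"
| "rrh (Suc (Suc n)) =
     bind_pmf (rrh (Suc n))
       (\<lambda>E. map_pmf (\<lambda>e. insert (insert (Suc (Suc n)) e) E) (pmf_of_set E))"

definition hdegree :: "nat \<Rightarrow> nat set set \<Rightarrow> nat" where
  "hdegree v E = card {e \<in> E. v \<in> e}"

end

theory Submission
  imports Defs
begin

text \<open>The degree of vertex m evolves like a Polya urn: the new edge of size n + 1 contains m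
exactly when the uniformly chosen old edge does, so from size n to n + 1 a degree k grows by one
with probability k / n, and vertex m starts with degree 1 at size m. The law P n d of the degree
therefore satisfies n P (n + 1) d = (n - d) P n d + (d - 1) P n (d - 1), and this recurrence is
solved by P N d = C(N - d - 1, m - 2) / C(N - 1, m - 1), as two instances of the absorption identity
(n - k) C(n, k) = n C(n - 1, k) show.\<close>

lemma rrh_Suc:
  "n \<ge> 1 \<Longrightarrow> rrh (Suc n) = rrh n \<bind> (\<lambda>E. map_pmf (\<lambda>e. insert (insert (Suc n) e) E) (pmf_of_set E))"
  by (cases n) auto

lemma rrh_support:
  assumes "n \<ge> 1" "E \<in> set_pmf (rrh n)"
  shows "finite E \<and> card E = n \<and> (\<forall>e\<in>E. e \<subseteq> {1..n})"
  using assms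
proof (induction n arbitrary: E rule: dec_induct)
  case base
  then show ?case by simp
next
  case (step n)
  from step.prems obtain E0 e where E0: "E0 \<in> set_pmf (rrh n)" and e: "e \<in> set_pmf (pmf_of_set E0)"
    and E: "E = insert (insert (Suc n) e) E0"
    by (auto simp: rrh_Suc[OF step.hyps(1)])
  from step.IH[OF E0] have fin: "finite E0" and card: "card E0 = n"
    and edges: "\<forall>e\<in>E0. e \<subseteq> {1..n}" by auto
  with e step.hyps(1) have "e \<subseteq> {1..n}" by (subst (asm) set_pmf_of_set) auto
  then have "insert (Suc n) e \<subseteq> {1..Suc n}" and "insert (Suc n) e \<notin> E0"
    using edges by auto
  with fin card edges show ?case unfolding E by force
qed

lemma hdegree_insert:
  assumes "x \<notin> E" "finite E"
  shows "hdegree v (insert x E) = hdegree v E + of_bool (v \<in> x)"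
proof (cases "v \<in> x")
  case True
  then have "{e \<in> insert x E. v \<in> e} = insert x {e \<in> E. v \<in> e}" by auto
  with True assms show ?thesis by (simp add: hdegree_def)
next
  case False
  then have "{e \<in> insert x E. v \<in> e} = {e \<in> E. v \<in> e}" by auto
  with False show ?thesis by (simp add: hdegree_def)
qed

lemma hdegree_rrh_extend:
  assumes "n \<ge> 1" "E \<in> set_pmf (rrh n)"
  shows "hdegree v (insert (insert (Suc n) e) E) = hdegree v E + of_bool (v \<in> insert (Suc n) e)"
proof -
  from rrh_support[OF assms] have "finite E" "insert (Suc n) e \<notin> E" by auto
  then show ?thesis by (rule hdegree_insert[rotated])
qed

lemma hdegree_rrh_newest:
  assumes "E \<in> set_pmf (rrh (Suc n))"
  shows "hdegree (Suc n) E = 1"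
proof (cases "n = 0")
  case True
  then have "{e \<in> E. Suc n \<in> e} = {{1}}" using assms by auto
  then show ?thesis by (simp add: hdegree_def)
next
  case False
  then have n: "n \<ge> 1" by simp
  from assms obtain E0 e where E0: "E0 \<in> set_pmf (rrh n)" and E: "E = insert (insert (Suc n) e) E0"
    by (auto simp: rrh_Suc[OF n])
  have "hdegree (Suc n) E0 = 0"
    using rrh_support[OF n E0] by (fastforce simp: hdegree_def)
  then show ?thesis unfolding E hdegree_rrh_extend[OF n E0] by simp
qed

definition degree_pmf :: "nat \<Rightarrow> nat \<Rightarrow> nat pmf" where
  "degree_pmf v n = map_pmf (hdegree v) (rrh n)"

lemma prob_hdegree_eq: "measure_pmf.prob (rrh n) {E. hdegree v E = d} = pmf (degree_pmf v n) d"
  by (simp add: degree_pmf_def pmf_map vimage_def)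

definition degree_transition :: "nat \<Rightarrow> nat \<Rightarrow> nat \<Rightarrow> real" where
  "degree_transition n k d =
     (if d = k then real (n - k) / n else if d = Suc k then real k / n else 0)"

lemma prob_hdegree_rrh_extend:
  assumes n: "n \<ge> 1" and v: "v \<le> n" and E: "E \<in> set_pmf (rrh n)"
  shows "measure_pmf.prob (pmf_of_set E) {e. hdegree v (insert (insert (Suc n) e) E) = d}
           = degree_transition n (hdegree v E) d"
proof -
  define k where "k = hdegree v E"
  from rrh_support[OF n E] have fin: "finite E" and card: "card E = n" by auto
  with n have ne: "E \<noteq> {}" by auto
  have "card {e \<in> E. v \<in> e} = k" by (simp add: k_def hdegree_def)
  moreover have "card {e \<in> E. v \<notin> e} = n - k"
  proof -
    have "{e \<in> E. v \<notin> e} = E - {e \<in> E. v \<in> e}" by auto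
    then show ?thesis using fin card \<open>card {e \<in> E. v \<in> e} = k\<close> by (simp add: card_Diff_subset)
  qed
  moreover have "E \<inter> {e. hdegree v (insert (insert (Suc n) e) E) = d}
      = (if d = k then {e \<in> E. v \<notin> e} else if d = Suc k then {e \<in> E. v \<in> e} else {})"
    using v by (auto simp: hdegree_rrh_extend[OF n E] k_def)
  ultimately show ?thesis
    by (simp add: measure_pmf_of_set[OF ne fin] card degree_transition_def k_def)
qed

text \<open>At \<open>d = 0\<close> the second summand vanishes because \<open>real (0 - 1) = 0\<close>.\<close>

definition degree_step :: "nat \<Rightarrow> (nat \<Rightarrow> real) \<Rightarrow> nat \<Rightarrow> real" where
  "degree_step n p d = (real (n - d) * p d + real (d - 1) * p (d - 1)) / n"

lemma pmf_degree_pmf_Suc: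
  assumes n: "n \<ge> 1" and v: "v \<le> n"
  shows "pmf (degree_pmf v (Suc n)) d = degree_step n (pmf (degree_pmf v n)) d"
proof -
  have "pmf (degree_pmf v (Suc n)) d
      = (\<integral>E. measure_pmf.prob (pmf_of_set E) {e. hdegree v (insert (insert (Suc n) e) E) = d} \<partial>rrh n)"
    by (simp add: degree_pmf_def rrh_Suc[OF n] map_bind_pmf pmf_bind pmf_map vimage_def)
  also have "\<dots> = (\<integral>E. degree_transition n (hdegree v E) d \<partial>rrh n)"
    by (intro integral_cong_AE AE_pmfI) (simp_all add: prob_hdegree_rrh_extend[OF n v])
  also have "\<dots> = (\<integral>k. degree_transition n k d \<partial>degree_pmf v n)"
    by (simp add: degree_pmf_def)
  also have "\<dots> = (\<Sum>k\<in>{d - 1, d}. degree_transition n k d * pmf (degree_pmf v n) k)"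
    by (rule integral_measure_pmf_real) (auto simp: degree_transition_def split: if_splits)
  also have "\<dots> = degree_step n (pmf (degree_pmf v n)) d"
    by (cases d) (auto simp: degree_transition_def degree_step_def add_divide_distrib)
  finally show ?thesis .
qed

lemma pmf_degree_pmf_newest: "pmf (degree_pmf (Suc n) (Suc n)) d = of_bool (d = 1)"
proof -
  have "degree_pmf (Suc n) (Suc n) = return_pmf 1"
    unfolding degree_pmf_def set_pmf_subset_singleton[symmetric] by (auto simp: hdegree_rrh_newest)
  then show ?thesis by simp
qed

definition degree_law :: "nat \<Rightarrow> nat \<Rightarrow> nat \<Rightarrow> real" where
  "degree_law m n d =
     (if 1 \<le> d \<and> d + m \<le> Suc n
      then real ((n - d - 1) choose (m - 2)) / real ((n - 1) choose (m - 1)) else 0)"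

lemma degree_law_self: "m \<ge> 2 \<Longrightarrow> degree_law m m d = of_bool (d = 1)"
  by (auto simp: degree_law_def numeral_2_eq_2)

lemma of_nat_binomial_absorb_comp:
  "(real n - real k) * real (n choose k) = real n * real ((n - 1) choose k)"
proof (cases "k \<le> n")
  case True
  then show ?thesis using binomial_absorb_comp[of n k] by (metis of_nat_diff of_nat_mult)
qed (simp add: binomial_eq_0)

lemma degree_law_Suc:
  assumes m: "m \<ge> 2" and mn: "m \<le> n"
  shows "degree_law m (Suc n) d = degree_step n (degree_law m n) d"
proof -
  define c where "c = real ((n - 1) choose (m - 1))"
  define B where "B = real (n choose (m - 1))"
  have "c > 0" "B > 0" "real n > 0" using m mn by (simp_all add: c_def B_def)
  have "real (m - 1) = real m - 1" using m by simp
  then have "(real n - real m + 1) * B = real n * c"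
    using of_nat_binomial_absorb_comp[of n "m - 1"] by (simp add: c_def B_def algebra_simps)
  with \<open>B > 0\<close> have absorb: "real n - real m + 1 = real n * c / B"
    by (simp add: field_simps)
  consider (interior) "1 \<le> d" "d + m \<le> Suc n" | (boundary) "d + m = Suc (Suc n)"
    | (outside) "d = 0 \<or> d + m > Suc (Suc n)"
    by linarith
  then show ?thesis
  proof cases
    case interior
    define X where "X = real ((n - d) choose (m - 2))"
    define Y where "Y = real ((n - d - 1) choose (m - 2))"
    have absorb_interior: "(real n - real d - real m + 2) * X = (real n - real d) * Y"
      using of_nat_binomial_absorb_comp[of "n - d" "m - 2"] interior m
      by (simp add: X_def Y_def of_nat_diff algebra_simps)
    have step_terms: "degree_law m n d = Y / c" "real (d - 1) * degree_law m n (d - 1) = (real d - 1) * X / c"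
      using interior by (auto simp: degree_law_def X_def Y_def c_def Suc_diff_Suc)
    have "degree_step n (degree_law m n) d = ((real n - real d) * Y + (real d - 1) * X) / (c * n)"
      using interior m step_terms by (simp add: degree_step_def of_nat_diff add_divide_distrib)
    also have "\<dots> = (real n - real m + 1) * X / (c * n)"
      using absorb_interior by (simp add: algebra_simps)
    also have "\<dots> = X / B"
      using \<open>c > 0\<close> \<open>real n > 0\<close> unfolding absorb by simp
    also have "\<dots> = degree_law m (Suc n) d"
      using interior by (simp add: degree_law_def X_def B_def)
    finally show ?thesis ..
  next
    case boundary
    then have "n - d = m - 2" "n - (d - 1) - 1 = m - 2" "real (d - 1) = real n - real m + 1"
      using m mn by (auto simp: of_nat_diff)
    with boundary have "degree_law m (Suc n) d = 1 / B" "degree_law m n d = 0"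
      "real (d - 1) * degree_law m n (d - 1) = (real n - real m + 1) / c"
      by (auto simp: degree_law_def B_def c_def)
    then show ?thesis
      using \<open>c > 0\<close> \<open>real n > 0\<close> by (simp add: degree_step_def absorb)
  next
    case outside
    then show ?thesis by (auto simp: degree_law_def degree_step_def)
  qed
qed

lemma pmf_degree_pmf_eq_degree_law:
  assumes "m \<ge> 2" "m \<le> n"
  shows "pmf (degree_pmf m n) d = degree_law m n d"
  using assms(2)
proof (induction n arbitrary: d rule: dec_induct)
  case base
  from assms(1) have "m = Suc (m - 1)" by simp
  then show ?case using assms(1) by (metis pmf_degree_pmf_newest degree_law_self)
next
  case (step n)
  then show ?case using assms(1)
    by (simp add: pmf_degree_pmf_Suc degree_law_Suc degree_step_def step.IH)
qed

lemma Gamma_eq_fact: "x = real n + 1 \<Longrightarrow> Gamma x = fact n"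
  using Gamma_fact[of n] by (simp add: add.commute)

lemma degree_law_Gamma:
  assumes m: "m \<ge> 2" and d: "1 \<le> d" "d + m \<le> Suc N"
  shows "degree_law m N d
           = real (m - 1) * Gamma (real N - real d) * Gamma (real N - real m + 1)
             / (Gamma (real N - real d - real m + 2) * Gamma (real N))"
proof -
  have gammas: "Gamma (real N - real d) = fact (N - d - 1)"
    "Gamma (real N - real m + 1) = fact (N - m)"
    "Gamma (real N - real d - real m + 2) = fact (N - d - 1 - (m - 2))"
    "Gamma (real N) = fact (N - 1)"
    using m d by (auto intro!: Gamma_eq_fact simp: of_nat_diff)
  have binomials: "real ((N - d - 1) choose (m - 2)) = fact (N - d - 1) / (fact (m - 2) * fact (N - d - 1 - (m - 2)))"
    "real ((N - 1) choose (m - 1)) = fact (N - 1) / (real (m - 1) * fact (m - 2) * fact (N - m))"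
  proof -
    show "real ((N - d - 1) choose (m - 2)) = fact (N - d - 1) / (fact (m - 2) * fact (N - d - 1 - (m - 2)))"
      using m d by (intro binomial_fact) simp
    have "(fact (m - 1) :: real) = real (m - 1) * fact (m - 2)"
      using m fact_Suc[of "m - 2", where 'a = real] by (simp add: Suc_diff_Suc numeral_2_eq_2)
    then show "real ((N - 1) choose (m - 1)) = fact (N - 1) / (real (m - 1) * fact (m - 2) * fact (N - m))"
      using m d binomial_fact[of "m - 1" "N - 1", where 'a = real] by simp
  qed
  have "degree_law m N d = real ((N - d - 1) choose (m - 2)) / real ((N - 1) choose (m - 1))"
    using d by (simp add: degree_law_def)
  also have "\<dots> = real (m - 1) * fact (N - d - 1) * fact (N - m) / (fact (N - d - 1 - (m - 2)) * fact (N - 1))"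
    unfolding binomials using m by (simp add: field_simps)
  finally show ?thesis
    unfolding gammas .
qed

lemma degree_law_two: "1 \<le> d \<Longrightarrow> d < N \<Longrightarrow> degree_law 2 N d = 1 / real (N - 1)"
  by (simp add: degree_law_def)

lemma degree_law_three:
  assumes "1 \<le> d" "d + 2 \<le> N"
  shows "degree_law 3 N d = 2 * (real N - real d - 1) / ((real N - 1) * (real N - 2))"
proof -
  have "2 * ((N - 1) choose 2) = (N - 1) * (N - 2)"
    using times_binomial_minus1_eq[of 2 "N - 1"] by (simp add: numeral_2_eq_2)
  then have "2 * real ((N - 1) choose 2) = real (N - 1) * real (N - 2)"
    by (metis of_nat_mult of_nat_numeral)
  then have choose2: "real ((N - 1) choose 2) = (real N - 1) * (real N - 2) / 2"
    using assms by (simp add: of_nat_diff)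
  have "degree_law 3 N d = real (N - d - 1) / real ((N - 1) choose 2)"
    using assms by (simp add: degree_law_def)
  also have "\<dots> = 2 * (real N - real d - 1) / ((real N - 1) * (real N - 2))"
    unfolding choose2 using assms by (simp add: of_nat_diff)
  finally show ?thesis .
qed

theorem mainTheorem10:
  fixes m :: nat
  assumes "m \<ge> 2"
  shows "(\<forall>N d. N \<ge> m \<and> 1 \<le> d \<and> d \<le> N - m + 1 \<longrightarrow>
            measure_pmf.prob (rrh N) {E. hdegree m E = d}
            = real (m - 1) * Gamma (real N - real d) * Gamma (real N - real m + 1)
              / (Gamma (real N - real d - real m + 2) * Gamma (real N)))
       \<and> (\<forall>N d. N \<ge> 2 \<and> 1 \<le> d \<and> d \<le> N - 1 \<longrightarrow>
            measure_pmf.prob (rrh N) {E. hdegree 2 E = d} = 1 / real (N - 1))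
       \<and> (\<forall>N d. N \<ge> 3 \<and> 1 \<le> d \<and> d \<le> N - 2 \<longrightarrow>
            measure_pmf.prob (rrh N) {E. hdegree 3 E = d}
            = 2 * (real N - real d - 1) / ((real N - 1) * (real N - 2)))"
proof (intro conjI allI impI)
  fix N d :: nat
  assume "N \<ge> m \<and> 1 \<le> d \<and> d \<le> N - m + 1"
  then have "m \<le> N" "1 \<le> d" "d + m \<le> Suc N" by auto
  then show "measure_pmf.prob (rrh N) {E. hdegree m E = d}
            = real (m - 1) * Gamma (real N - real d) * Gamma (real N - real m + 1)
              / (Gamma (real N - real d - real m + 2) * Gamma (real N))"
    unfolding prob_hdegree_eq pmf_degree_pmf_eq_degree_law[OF assms \<open>m \<le> N\<close>]
    using assms by (intro degree_law_Gamma)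
next
  fix N d :: nat
  assume "N \<ge> 2 \<and> 1 \<le> d \<and> d \<le> N - 1"
  then have "N \<ge> 2" "1 \<le> d" "d < N" by auto
  then show "measure_pmf.prob (rrh N) {E. hdegree 2 E = d} = 1 / real (N - 1)"
    by (simp add: prob_hdegree_eq pmf_degree_pmf_eq_degree_law degree_law_two)
next
  fix N d :: nat
  assume "N \<ge> 3 \<and> 1 \<le> d \<and> d \<le> N - 2"
  then have "N \<ge> 3" "1 \<le> d" "d + 2 \<le> N" by auto
  then show "measure_pmf.prob (rrh N) {E. hdegree 3 E = d}
            = 2 * (real N - real d - 1) / ((real N - 1) * (real N - 2))"
    by (simp add: prob_hdegree_eq pmf_degree_pmf_eq_degree_law degree_law_three)
qed

end
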